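(* Let $l_0<r_0$ and let $\rho_0:[l_0,r_0]\to[-1,1]$ be differentiable with bounded derivative, $\rho_0(l_0)=1$, $\rho_0(r_0)=-1$, and set $\bar l=(4\|\rho_0'\|_\infty)^{-1}$. Let $\tilde l$ (nondecreasing) and $\tilde r$ (nonincreasing) be continuous with $\tilde l(0)=l_0$, $\tilde r(0)=r_0$, $\tilde l<\tilde r$, and let $\rho$ solve $\partial_t\rho=\rho_{xx}$ on $\{(x,t):\tilde l(t)<x<\tilde r(t)\}$ with $\rho(\tilde l(t),t)=1$, $\rho(\tilde r(t),t)=-1$, $\rho(\cdot,0)=\rho_0$. If $\tau>0$ is such that $\tilde l(t)\le l_0+2\bar l$ and $\tilde r(t)\ge r_0-2\bar l$ for all $t<\tau$, then $$\rho(x,t)\ge0\ \ \forall t\le\tau,\ \forall x\in[\tilde l(t),l_0+2\bar l],\qquad \rho(x,t)\le0\ \ \forall t\le\tau,\ \forall x\in[r_0-2\bar l,\tilde r(t)].$$ *)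

theory Defs
  imports "HOL-Analysis.Analysis"
begin

definition closed_region :: "(real \<Rightarrow> real) \<Rightarrow> (real \<Rightarrow> real) \<Rightarrow> (real \<times> real) set" where
  "closed_region lt rt = {(x, t). 0 \<le> t \<and> lt t \<le> x \<and> x \<le> rt t}"

definition heat_solution ::
  "(real \<Rightarrow> real \<Rightarrow> real) \<Rightarrow> (real \<Rightarrow> real) \<Rightarrow> (real \<Rightarrow> real) \<Rightarrow> bool" where
  "heat_solution rho lt rt \<longleftrightarrow>
     continuous_on (closed_region lt rt) (\<lambda>(x, t). rho x t) \<and>
     (\<forall>x t. 0 < t \<and> lt t < x \<and> x < rt t \<longrightarrow>
        (\<lambda>y. rho y t) differentiable (at x) \<and>
        deriv (\<lambda>y. rho y t) differentiable (at x) \<and>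
        ((\<lambda>s. rho x s) has_real_derivative deriv (deriv (\<lambda>y. rho y t)) x) (at t))"

end

theory Submission
  imports Defs
begin

text \<open>
  The proof is a comparison argument with linear barriers, based on the weak
  maximum principle on the moving domain between the walls lt and rt.

  Since the heat equation is invariant under adding affine functions of x and
  under scaling, it suffices to prove a weak minimum principle: a solution that
  is nonnegative on the parabolic boundary (the walls and the initial line) is
  nonnegative everywhere.  This is the classical argument: perturb by
  \<open>\<epsilon> t\<close>, take a minimum over the compact region up to time T, and note that
  at an interior minimum the spatial second derivative is nonnegative, so the
  time derivative is positive, contradicting minimality at earlier times (the
  walls move outwards, so earlier points stay in the region).

  For the theorem, set \<open>\<delta> = 1/(2 \<parallel>\<rho>0'\<parallel>)\<close>, twice the length l-bar of the
  statement.  The Lipschitz bound on \<open>\<rho>0\<close> shows \<open>r0 - l0 \<ge> 4\<delta>\<close> and that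
  \<open>\<rho>0\<close> lies above the line \<open>1 - (x - l0)/\<delta>\<close> and below \<open>-1 + (r0 - x)/\<delta>\<close>; the wall positions make
  these lines barriers on the boundary as well, and comparison gives the sign
  of \<open>\<rho>\<close> within distance \<open>\<delta>\<close> of \<open>l0\<close> and of \<open>r0\<close>.
\<close>

lemma local_min_second_deriv_nonneg:
  fixes f :: "real \<Rightarrow> real"
  assumes lx: "l < x" and xr: "x < r"
    and diff: "\<And>y. y \<in> {l<..<r} \<Longrightarrow> f differentiable (at y)"
    and diff2: "deriv f differentiable (at x)"
    and min: "\<And>y. y \<in> {l<..<r} \<Longrightarrow> f x \<le> f y"
  shows "deriv (deriv f) x \<ge> 0"
proof (rule ccontr)
  assume "\<not> deriv (deriv f) x \<ge> 0"
  then have neg: "deriv (deriv f) x < 0" by simp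
  have f': "(f has_real_derivative deriv f y) (at y)" if "y \<in> {l<..<r}" for y
    using diff[OF that] by (simp add: DERIV_deriv_iff_real_differentiable)
  have crit: "deriv f x = 0"
  proof (rule DERIV_local_min[OF f'])
    show "x \<in> {l<..<r}" using lx xr by simp
    show "0 < min (x - l) (r - x)" using lx xr by simp
    show "\<forall>y. \<bar>x - y\<bar> < min (x - l) (r - x) \<longrightarrow> f x \<le> f y"
      using min by (auto simp: abs_if split: if_splits)
  qed
  have "(deriv f has_real_derivative deriv (deriv f) x) (at x)"
    using diff2 by (simp add: DERIV_deriv_iff_real_differentiable)
  from DERIV_neg_dec_right[OF this neg] crit obtain d where d: "d > 0"
    and dec: "\<And>k. 0 < k \<Longrightarrow> k < d \<Longrightarrow> deriv f (x + k) < 0" by force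
  define h where "h = min (d / 2) ((r - x) / 2)"
  have "h \<le> d / 2" "h \<le> (r - x) / 2" unfolding h_def by (rule min.cobounded1, rule min.cobounded2)
  then have h: "0 < h" "h < d" "x + h < r" using d xr by (auto simp: h_def)
  obtain z where z: "x < z" "z < x + h" "f (x + h) - f x = h * deriv f z"
    using MVT2[of x "x + h" f "deriv f"] f' h lx by force
  have "h * deriv f z < 0"
    using dec[of "z - x"] z h by (simp add: mult_pos_neg)
  with z have "f (x + h) < f x" by simp
  moreover have "f x \<le> f (x + h)" using min h lx by simp
  ultimately show False by simp
qed

lemma heat_solution_affine:
  assumes "heat_solution rho lt rt"
  shows "heat_solution (\<lambda>x t. s * rho x t - (a + b * x)) lt rt"
  unfolding heat_solution_def
proof (intro conjI allI impI)
  have "continuous_on (closed_region lt rt) (\<lambda>p. rho (fst p) (snd p))"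
    using assms by (simp add: heat_solution_def case_prod_unfold)
  then show "continuous_on (closed_region lt rt) (\<lambda>(x, t). s * rho x t - (a + b * x))"
    by (simp add: case_prod_unfold continuous_intros)
next
  fix x t assume xt: "0 < t \<and> lt t < x \<and> x < rt t"
  define f where "f = (\<lambda>y. rho y t)"
  define g where "g = (\<lambda>y. s * f y - (a + b * y))"
  have smooth: "f differentiable (at y) \<and> deriv f differentiable (at y) \<and>
      ((\<lambda>\<sigma>. rho y \<sigma>) has_real_derivative deriv (deriv f) y) (at t)"
    if "y \<in> {lt t<..<rt t}" for y
    using assms xt that unfolding heat_solution_def f_def by auto
  have g': "(g has_real_derivative s * deriv f y - b) (at y)" if "y \<in> {lt t<..<rt t}" for y
  proof -
    have "(f has_real_derivative deriv f y) (at y)"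
      using smooth[OF that] by (simp add: DERIV_deriv_iff_real_differentiable)
    then show ?thesis unfolding g_def by (auto intro!: derivative_eq_intros)
  qed
  have deriv_g: "deriv g y = s * deriv f y - b" if "y \<in> {lt t<..<rt t}" for y
    using DERIV_imp_deriv[OF g'[OF that]] .
  have x_in: "x \<in> {lt t<..<rt t}" using xt by simp
  have "((\<lambda>y. s * deriv f y - b) has_real_derivative s * deriv (deriv f) x) (at x)"
    using smooth[OF x_in] by (auto intro!: derivative_eq_intros simp: DERIV_deriv_iff_real_differentiable)
  then have g'': "(deriv g has_real_derivative s * deriv (deriv f) x) (at x)"
    by (rule has_field_derivative_transform_within_open[where S = "{lt t<..<rt t}"])
       (use x_in deriv_g in auto)
  show "(\<lambda>y. s * rho y t - (a + b * y)) differentiable (at x)"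
    using g'[OF x_in] unfolding g_def f_def by (auto simp: real_differentiable_def)
  show "deriv (\<lambda>y. s * rho y t - (a + b * y)) differentiable (at x)"
    using g'' unfolding g_def f_def by (auto simp: real_differentiable_def)
  have "((\<lambda>\<sigma>. s * rho x \<sigma> - (a + b * x)) has_real_derivative s * deriv (deriv f) x) (at t)"
    using smooth[OF x_in] by (auto intro!: derivative_eq_intros)
  then show "((\<lambda>\<sigma>. s * rho x \<sigma> - (a + b * x)) has_real_derivative
      deriv (deriv (\<lambda>y. s * rho y t - (a + b * y))) x) (at t)"
    using DERIV_imp_deriv[OF g''] unfolding g_def f_def by simp
qed

definition region_upto :: "(real \<Rightarrow> real) \<Rightarrow> (real \<Rightarrow> real) \<Rightarrow> real \<Rightarrow> (real \<times> real) set" where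
  "region_upto lt rt T = {(x, t). 0 \<le> t \<and> t \<le> T \<and> lt t \<le> x \<and> x \<le> rt t}"

lemma region_upto_subset: "region_upto lt rt T \<subseteq> closed_region lt rt"
  by (auto simp: region_upto_def closed_region_def)

lemma region_upto_mono: "S \<le> T \<Longrightarrow> region_upto lt rt S \<subseteq> region_upto lt rt T"
  by (auto simp: region_upto_def)

lemma compact_region_upto:
  assumes mono: "mono_on {0..} lt" and anti: "antimono_on {0..} rt"
    and clt: "continuous_on {0..} lt" and crt: "continuous_on {0..} rt"
  shows "compact (region_upto lt rt T)"
proof -
  define clamp where "clamp = (\<lambda>t::real. max 0 (min T t))"
  have "continuous_on UNIV clamp" "clamp ` UNIV \<subseteq> {0..}"
    by (auto simp: clamp_def intro!: continuous_intros)
  then have clt': "continuous_on UNIV (\<lambda>t. lt (clamp t))"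
    and crt': "continuous_on UNIV (\<lambda>t. rt (clamp t))"
    using continuous_on_compose2 clt crt by blast+
  have eq: "region_upto lt rt T = {p. 0 \<le> snd p} \<inter> {p. snd p \<le> T} \<inter>
      {p. lt (clamp (snd p)) \<le> fst p} \<inter> {p. fst p \<le> rt (clamp (snd p))}"
    by (auto simp: region_upto_def clamp_def)
  have "closed (region_upto lt rt T)" unfolding eq
    by (intro closed_Int closed_Collect_le continuous_intros
        continuous_on_compose2[OF clt' continuous_on_snd]
        continuous_on_compose2[OF crt' continuous_on_snd]) auto
  moreover have "region_upto lt rt T \<subseteq> cbox (lt 0, 0) (rt 0, T)"
  proof
    fix p assume "p \<in> region_upto lt rt T"
    then obtain x t where p: "p = (x, t)" "0 \<le> t" "t \<le> T" "lt t \<le> x" "x \<le> rt t"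
      by (auto simp: region_upto_def)
    have "lt 0 \<le> lt t" "rt t \<le> rt 0"
      using mono_onD[OF mono] monotone_onD[OF anti] p by auto
    with p show "p \<in> cbox (lt 0, 0) (rt 0, T)" by (auto simp: cbox_Pair_iff)
  qed
  then have "bounded (region_upto lt rt T)" by (rule bounded_subset[OF bounded_cbox])
  ultimately show ?thesis by (simp add: compact_eq_bounded_closed)
qed

text \<open>The spatial second
  derivative there is nonnegative, so u increases strictly in time, while the
  point slightly earlier in time still lies in the region because the walls
  move outwards.\<close>
lemma no_interior_min:
  assumes hs: "heat_solution u lt rt" and mono: "mono_on {0..} lt" and anti: "antimono_on {0..} rt"
    and eps: "\<epsilon> > 0" and ts: "ts > 0" and xl: "lt ts < xs" and xr: "xs < rt ts"
    and min: "\<And>y t. (y, t) \<in> region_upto lt rt ts \<Longrightarrow> u xs ts + \<epsilon> * ts \<le> u y t + \<epsilon> * t"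
  shows False
proof -
  define f where "f = (\<lambda>y. u y ts)"
  have smooth: "f differentiable (at y) \<and> deriv f differentiable (at y) \<and>
      ((\<lambda>\<sigma>. u y \<sigma>) has_real_derivative deriv (deriv f) y) (at ts)"
    if "y \<in> {lt ts<..<rt ts}" for y
    using hs ts that unfolding heat_solution_def f_def by auto
  have "deriv (deriv f) xs \<ge> 0"
  proof (rule local_min_second_deriv_nonneg[OF xl xr])
    show "f differentiable (at y)" if "y \<in> {lt ts<..<rt ts}" for y using smooth[OF that] by simp
    show "deriv f differentiable (at xs)" using smooth xl xr by simp
    show "f xs \<le> f y" if "y \<in> {lt ts<..<rt ts}" for y
      using min[of y ts] that ts by (simp add: region_upto_def f_def)
  qed
  then have pos: "deriv (deriv f) xs + \<epsilon> > 0" using eps by simp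
  have "((\<lambda>\<sigma>. u xs \<sigma> + \<epsilon> * \<sigma>) has_real_derivative deriv (deriv f) xs + \<epsilon>) (at ts)"
    using smooth xl xr by (auto intro!: derivative_eq_intros)
  from DERIV_pos_inc_left[OF this pos] obtain d where d: "d > 0"
    and inc: "\<And>h. 0 < h \<Longrightarrow> h < d \<Longrightarrow> u xs (ts - h) + \<epsilon> * (ts - h) < u xs ts + \<epsilon> * ts"
    by blast
  define h where "h = min (d / 2) ts"
  have h: "0 < h" "h < d" "h \<le> ts" using d ts by (auto simp: h_def min_def)
  have "lt (ts - h) \<le> lt ts" "rt ts \<le> rt (ts - h)"
    using mono_onD[OF mono] monotone_onD[OF anti] h by auto
  then have "(xs, ts - h) \<in> region_upto lt rt ts" using h xl xr by (auto simp: region_upto_def)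
  from min[OF this] inc[OF h(1,2)] show False by simp
qed

lemma weak_min_principle:
  assumes hs: "heat_solution u lt rt" and mono: "mono_on {0..} lt" and anti: "antimono_on {0..} rt"
    and clt: "continuous_on {0..} lt" and crt: "continuous_on {0..} rt"
    and boundary: "\<And>t. 0 \<le> t \<Longrightarrow> t \<le> T \<Longrightarrow> u (lt t) t \<ge> 0 \<and> u (rt t) t \<ge> 0"
    and initial: "\<And>x. lt 0 \<le> x \<Longrightarrow> x \<le> rt 0 \<Longrightarrow> u x 0 \<ge> 0"
    and xt: "(x, t) \<in> region_upto lt rt T"
  shows "u x t \<ge> 0"
proof (rule ccontr)
  assume "\<not> u x t \<ge> 0"
  then have neg: "u x t < 0" by simp
  have t: "0 \<le> t" "t \<le> T" using xt by (auto simp: region_upto_def)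
  define \<epsilon> where "\<epsilon> = - u x t / (t + 1)"
  have eps: "\<epsilon> > 0" using neg t by (simp add: \<epsilon>_def divide_neg_pos)
  have "\<epsilon> * t < \<epsilon> * (t + 1)" using eps by simp
  then have eps_t: "u x t + \<epsilon> * t < 0" using t by (simp add: \<epsilon>_def)
  define v where "v = (\<lambda>p::real \<times> real. u (fst p) (snd p) + \<epsilon> * snd p)"
  have "continuous_on (closed_region lt rt) (\<lambda>p. u (fst p) (snd p))"
    using hs by (simp add: heat_solution_def case_prod_unfold)
  then have "continuous_on (region_upto lt rt T) v"
    unfolding v_def by (intro continuous_intros continuous_on_subset[OF _ region_upto_subset])
  with compact_region_upto[OF mono anti clt crt] xt obtain p
    where p: "p \<in> region_upto lt rt T" and p_min: "\<And>q. q \<in> region_upto lt rt T \<Longrightarrow> v p \<le> v q"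
    using continuous_attains_inf[of "region_upto lt rt T" v] by blast
  obtain xs ts where p_eq: "p = (xs, ts)" by (cases p)
  have in_region: "0 \<le> ts" "ts \<le> T" "lt ts \<le> xs" "xs \<le> rt ts"
    using p p_eq by (auto simp: region_upto_def)
  have "v p < 0" using p_min[OF xt] eps_t by (simp add: v_def)
  moreover have "\<epsilon> * ts \<ge> 0" using eps in_region by simp
  ultimately have u_neg: "u xs ts < 0" by (simp add: p_eq v_def)
  have ts: "ts > 0" using initial[of xs] in_region u_neg by (cases "ts = 0") auto
  have "lt ts \<noteq> xs" "xs \<noteq> rt ts" using boundary[of ts] in_region u_neg by auto
  then have xl: "lt ts < xs" and xr: "xs < rt ts" using in_region by auto
  show False
  proof (rule no_interior_min[OF hs mono anti eps ts xl xr])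
    fix y \<sigma> assume "(y, \<sigma>) \<in> region_upto lt rt ts"
    then have "(y, \<sigma>) \<in> region_upto lt rt T" using region_upto_mono[OF in_region(2)] by blast
    from p_min[OF this] show "u xs ts + \<epsilon> * ts \<le> u y \<sigma> + \<epsilon> * \<sigma>" by (simp add: p_eq v_def)
  qed
qed

lemma affine_comparison:
  assumes hs: "heat_solution rho lt rt" and mono: "mono_on {0..} lt" and anti: "antimono_on {0..} rt"
    and clt: "continuous_on {0..} lt" and crt: "continuous_on {0..} rt"
    and boundary: "\<And>t. 0 \<le> t \<Longrightarrow> t \<le> T \<Longrightarrow>
        s * rho (lt t) t \<ge> a + b * lt t \<and> s * rho (rt t) t \<ge> a + b * rt t"
    and initial: "\<And>x. lt 0 \<le> x \<Longrightarrow> x \<le> rt 0 \<Longrightarrow> s * rho x 0 \<ge> a + b * x"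
    and xt: "(x, t) \<in> region_upto lt rt T"
  shows "s * rho x t \<ge> a + b * x"
  using weak_min_principle[OF heat_solution_affine[OF hs] mono anti clt crt _ _ xt,
      of s a b] boundary initial by simp

lemma bound_up_to_endpoint:
  fixes f :: "real \<Rightarrow> real"
  assumes cont: "continuous_on {0..} f" and tau: "\<tau> > 0"
    and bound: "\<And>t. 0 \<le> t \<Longrightarrow> t < \<tau> \<Longrightarrow> f t \<le> c"
    and t: "0 \<le> t" "t \<le> \<tau>"
  shows "f t \<le> c"
proof (rule continuous_le_on_closure[where S = "{0..<\<tau>}" and f = f and x = t])
  have cl: "closure {0..<\<tau>} = {0..\<tau>}" using tau by simp
  show "continuous_on (closure {0..<\<tau>}) f" unfolding cl by (rule continuous_on_subset[OF cont]) auto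
  show "t \<in> closure {0..<\<tau>}" unfolding cl using t by simp
qed (use bound in auto)

lemma lipschitz_from_derivative_bound:
  fixes f f' :: "real \<Rightarrow> real"
  assumes deriv: "\<forall>z\<in>{a..b}. (f has_real_derivative f' z) (at z within {a..b})"
    and bdd: "\<exists>B. \<forall>z\<in>{a..b}. \<bar>f' z\<bar> \<le> B"
    and xy: "x \<in> {a..b}" "y \<in> {a..b}"
  shows "\<bar>f x - f y\<bar> \<le> (SUP z\<in>{a..b}. \<bar>f' z\<bar>) * \<bar>x - y\<bar>"
proof -
  have "\<bar>f' z\<bar> \<le> (SUP z\<in>{a..b}. \<bar>f' z\<bar>)" if "z \<in> {a..b}" for z
    using bdd that by (intro cSUP_upper) (auto simp: bdd_above_def)
  then show ?thesis
    using field_differentiable_bound[of "{a..b}" f f'] deriv xy by auto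
qed

text \<open>Sign near the left wall: the barrier \<open>1 - (x - c)/\<delta>\<close> lies below \<open>\<rho>\<close> on
  the parabolic boundary provided the left wall stays right of c and the right
  wall stays at distance \<open>2\<delta>\<close> from c; the barrier is nonnegative for \<open>x \<le> c + \<delta>\<close>.\<close>
lemma nonneg_near_left_boundary:
  assumes hs: "heat_solution rho lt rt" and mono: "mono_on {0..} lt" and anti: "antimono_on {0..} rt"
    and clt: "continuous_on {0..} lt" and crt: "continuous_on {0..} rt" and \<delta>: "\<delta> > 0"
    and boundary_values: "\<And>t. 0 \<le> t \<Longrightarrow> t \<le> T \<Longrightarrow> rho (lt t) t = 1 \<and> rho (rt t) t = -1"
    and walls: "\<And>t. 0 \<le> t \<Longrightarrow> t \<le> T \<Longrightarrow> c \<le> lt t \<and> c + 2 * \<delta> \<le> rt t"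
    and initial: "\<And>x. lt 0 \<le> x \<Longrightarrow> x \<le> rt 0 \<Longrightarrow> rho x 0 \<ge> 1 - (x - c) / \<delta>"
    and t: "0 \<le> t" "t \<le> T" and x: "lt t \<le> x" "x \<le> c + \<delta>"
  shows "rho x t \<ge> 0"
proof -
  have barrier: "\<delta> * rho y \<sigma> \<ge> (\<delta> + c) + (- 1) * y"
    if "(y, \<sigma>) \<in> region_upto lt rt T" for y \<sigma>
  proof (rule affine_comparison[OF hs mono anti clt crt _ _ that])
    fix s assume "0 \<le> s" "s \<le> T"
    with boundary_values[of s] walls[of s]
    show "\<delta> * rho (lt s) s \<ge> (\<delta> + c) + (- 1) * lt s \<and> \<delta> * rho (rt s) s \<ge> (\<delta> + c) + (- 1) * rt s"
      by simp
  next
    fix y assume "lt 0 \<le> y" "y \<le> rt 0"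
    with initial[of y] \<delta> have "\<delta> * rho y 0 \<ge> \<delta> * (1 - (y - c) / \<delta>)" by simp
    also have "\<delta> * (1 - (y - c) / \<delta>) = (\<delta> + c) + (- 1) * y" using \<delta> by (simp add: field_simps)
    finally show "\<delta> * rho y 0 \<ge> (\<delta> + c) + (- 1) * y" .
  qed
  have "(x, t) \<in> region_upto lt rt T" using t x walls[of t] \<delta> by (auto simp: region_upto_def)
  from barrier[OF this] x have "\<delta> * rho x t \<ge> 0" by simp
  with \<delta> show ?thesis by (simp add: zero_le_mult_iff)
qed

lemma nonpos_near_right_boundary:
  assumes hs: "heat_solution rho lt rt" and mono: "mono_on {0..} lt" and anti: "antimono_on {0..} rt"
    and clt: "continuous_on {0..} lt" and crt: "continuous_on {0..} rt" and \<delta>: "\<delta> > 0"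
    and boundary_values: "\<And>t. 0 \<le> t \<Longrightarrow> t \<le> T \<Longrightarrow> rho (lt t) t = 1 \<and> rho (rt t) t = -1"
    and walls: "\<And>t. 0 \<le> t \<Longrightarrow> t \<le> T \<Longrightarrow> lt t \<le> c - 2 * \<delta> \<and> rt t \<le> c"
    and initial: "\<And>x. lt 0 \<le> x \<Longrightarrow> x \<le> rt 0 \<Longrightarrow> rho x 0 \<le> -1 + (c - x) / \<delta>"
    and t: "0 \<le> t" "t \<le> T" and x: "c - \<delta> \<le> x" "x \<le> rt t"
  shows "rho x t \<le> 0"
proof -
  have barrier: "(- \<delta>) * rho y \<sigma> \<ge> (\<delta> - c) + 1 * y"
    if "(y, \<sigma>) \<in> region_upto lt rt T" for y \<sigma>
  proof (rule affine_comparison[OF hs mono anti clt crt _ _ that])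
    fix s assume "0 \<le> s" "s \<le> T"
    with boundary_values[of s] walls[of s]
    show "(- \<delta>) * rho (lt s) s \<ge> (\<delta> - c) + 1 * lt s \<and> (- \<delta>) * rho (rt s) s \<ge> (\<delta> - c) + 1 * rt s"
      by simp
  next
    fix y assume "lt 0 \<le> y" "y \<le> rt 0"
    with initial[of y] \<delta> have "\<delta> * rho y 0 \<le> \<delta> * (-1 + (c - y) / \<delta>)" by simp
    also have "\<delta> * (-1 + (c - y) / \<delta>) = - ((\<delta> - c) + 1 * y)" using \<delta> by (simp add: field_simps)
    finally show "(- \<delta>) * rho y 0 \<ge> (\<delta> - c) + 1 * y" by simp
  qed
  have "(x, t) \<in> region_upto lt rt T" using t x walls[of t] \<delta> by (auto simp: region_upto_def)
  from barrier[OF this] x have "\<delta> * rho x t \<le> 0" by simp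
  with \<delta> show ?thesis by (simp add: mult_le_0_iff)
qed

lemma initial_profile_barriers:
  fixes rho0 drho0 :: "real \<Rightarrow> real"
  assumes lr: "l0 < r0"
    and deriv: "\<forall>x\<in>{l0..r0}. (rho0 has_real_derivative drho0 x) (at x within {l0..r0})"
    and bdd: "\<exists>B. \<forall>x\<in>{l0..r0}. \<bar>drho0 x\<bar> \<le> B"
    and ends: "rho0 l0 = 1" "rho0 r0 = -1"
    and width: "\<delta> = 2 * (1 / (4 * (SUP x\<in>{l0..r0}. \<bar>drho0 x\<bar>)))"
  shows "\<delta> > 0" and "4 * \<delta> \<le> r0 - l0"
    and "\<And>x. x \<in> {l0..r0} \<Longrightarrow> 1 - (x - l0) / \<delta> \<le> rho0 x \<and> rho0 x \<le> -1 + (r0 - x) / \<delta>"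
proof -
  define L where "L = (SUP x\<in>{l0..r0}. \<bar>drho0 x\<bar>)"
  have lip: "\<bar>rho0 x - rho0 y\<bar> \<le> L * \<bar>x - y\<bar>" if "x \<in> {l0..r0}" "y \<in> {l0..r0}" for x y
    unfolding L_def using lipschitz_from_derivative_bound[OF deriv bdd that] .
  have two: "2 \<le> L * (r0 - l0)" using lip[of r0 l0] lr ends by simp
  then have "0 < L * (r0 - l0)" by simp
  then have L: "L > 0" using lr by (simp add: zero_less_mult_iff)
  have \<delta>L: "\<delta> = 1 / (2 * L)" by (simp add: width L_def)
  show "\<delta> > 0" using L \<delta>L by simp
  show "4 * \<delta> \<le> r0 - l0" using two L by (simp add: \<delta>L field_simps)
  fix x assume x: "x \<in> {l0..r0}"
  have "1 - (x - l0) / \<delta> \<le> 1 - L * (x - l0)" using x L by (simp add: \<delta>L)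
  also have "\<dots> \<le> rho0 x" using lip[OF x, of l0] x ends by (simp add: abs_le_iff)
  finally have low: "1 - (x - l0) / \<delta> \<le> rho0 x" .
  have "rho0 x \<le> -1 + L * (r0 - x)" using lip[OF x, of r0] x ends by (simp add: abs_le_iff)
  also have "\<dots> \<le> -1 + (r0 - x) / \<delta>" using x L by (simp add: \<delta>L)
  finally show "1 - (x - l0) / \<delta> \<le> rho0 x \<and> rho0 x \<le> -1 + (r0 - x) / \<delta>" using low by simp
qed

lemma wall_positions:
  fixes lt rt :: "real \<Rightarrow> real"
  assumes mono: "mono_on {0..} lt" and anti: "antimono_on {0..} rt"
    and clt: "continuous_on {0..} lt" and crt: "continuous_on {0..} rt"
    and tau: "\<tau> > 0"
    and bound: "\<forall>t. 0 \<le> t \<and> t < \<tau> \<longrightarrow> lt t \<le> lt 0 + \<delta> \<and> rt t \<ge> rt 0 - \<delta>"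
    and t: "0 \<le> t" "t \<le> \<tau>"
  shows "lt 0 \<le> lt t \<and> lt t \<le> lt 0 + \<delta> \<and> rt 0 - \<delta> \<le> rt t \<and> rt t \<le> rt 0"
proof -
  have "lt 0 \<le> lt t" "rt t \<le> rt 0" using mono_onD[OF mono, of 0 t] monotone_onD[OF anti, of 0 t] t by auto
  moreover have "lt t \<le> lt 0 + \<delta>" using bound_up_to_endpoint[OF clt tau _ t] bound by blast
  moreover have "- rt t \<le> - (rt 0 - \<delta>)"
    using bound_up_to_endpoint[of "\<lambda>t. - rt t", OF _ tau _ t] crt bound
    by (force intro: continuous_intros)
  ultimately show ?thesis by simp
qed

theorem lemma3p4:
  fixes l0 r0 \<tau> :: real
    and rho0 drho0 :: "real \<Rightarrow> real"
    and lt rt :: "real \<Rightarrow> real"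
    and rho :: "real \<Rightarrow> real \<Rightarrow> real"
  assumes "l0 < r0"
    and "\<forall>x\<in>{l0..r0}. rho0 x \<in> {-1..1}"
    and "\<forall>x\<in>{l0..r0}. (rho0 has_real_derivative drho0 x) (at x within {l0..r0})"
    and "\<exists>B. \<forall>x\<in>{l0..r0}. \<bar>drho0 x\<bar> \<le> B"
    and "rho0 l0 = 1" and "rho0 r0 = -1"
    and "mono_on {0..} lt" and "antimono_on {0..} rt"
    and "continuous_on {0..} lt" and "continuous_on {0..} rt"
    and "lt 0 = l0" and "rt 0 = r0"
    and "\<forall>t\<ge>0. lt t < rt t"
    and "heat_solution rho lt rt"
    and "\<forall>t\<ge>0. rho (lt t) t = 1 \<and> rho (rt t) t = -1"
    and "\<forall>x\<in>{l0..r0}. rho x 0 = rho0 x"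
    and "\<tau> > 0"
    and "\<forall>t. 0 \<le> t \<and> t < \<tau> \<longrightarrow>
           lt t \<le> l0 + 2 * (1 / (4 * (SUP x\<in>{l0..r0}. \<bar>drho0 x\<bar>))) \<and>
           rt t \<ge> r0 - 2 * (1 / (4 * (SUP x\<in>{l0..r0}. \<bar>drho0 x\<bar>)))"
  shows "(\<forall>t. 0 \<le> t \<and> t \<le> \<tau> \<longrightarrow> (\<forall>x. lt t \<le> x \<and>
            x \<le> l0 + 2 * (1 / (4 * (SUP x\<in>{l0..r0}. \<bar>drho0 x\<bar>))) \<longrightarrow> rho x t \<ge> 0)) \<and>
         (\<forall>t. 0 \<le> t \<and> t \<le> \<tau> \<longrightarrow> (\<forall>x.
            r0 - 2 * (1 / (4 * (SUP x\<in>{l0..r0}. \<bar>drho0 x\<bar>))) \<le> x \<and> x \<le> rt t \<longrightarrow> rho x t \<le> 0))"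
proof -
  define \<delta> where "\<delta> = 2 * (1 / (4 * (SUP x\<in>{l0..r0}. \<bar>drho0 x\<bar>)))"
  note profile = initial_profile_barriers[OF assms(1,3,4,5,6) \<delta>_def]
  have walls: "l0 \<le> lt t \<and> lt t \<le> l0 + \<delta> \<and> r0 - \<delta> \<le> rt t \<and> rt t \<le> r0" if "0 \<le> t" "t \<le> \<tau>" for t
    using wall_positions[OF assms(7-10,17) _ that, of \<delta>] assms(11,12,18) by (simp add: \<delta>_def)
  have left_walls: "l0 \<le> lt t \<and> l0 + 2 * \<delta> \<le> rt t" if "0 \<le> t" "t \<le> \<tau>" for t
    using walls[OF that] profile(2) by simp
  have right_walls: "lt t \<le> r0 - 2 * \<delta> \<and> rt t \<le> r0" if "0 \<le> t" "t \<le> \<tau>" for t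
    using walls[OF that] profile(2) by simp
  have initial_left: "1 - (x - l0) / \<delta> \<le> rho x 0" if "lt 0 \<le> x" "x \<le> rt 0" for x
    using profile(3)[of x] assms(11,12,16) that by simp
  have initial_right: "rho x 0 \<le> -1 + (r0 - x) / \<delta>" if "lt 0 \<le> x" "x \<le> rt 0" for x
    using profile(3)[of x] assms(11,12,16) that by simp
  have boundary_values: "rho (lt t) t = 1 \<and> rho (rt t) t = -1" if "0 \<le> t" "t \<le> \<tau>" for t
    using assms(15) that by simp
  note near_left = nonneg_near_left_boundary[OF assms(14,7-10) profile(1)
      boundary_values left_walls initial_left]
  note near_right = nonpos_near_right_boundary[OF assms(14,7-10) profile(1)
      boundary_values right_walls initial_right]
  show ?thesis unfolding \<delta>_def[symmetric] using near_left near_right by blast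
qed

end
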